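(* Let $d\ge1$, $0<\lambda\le\Lambda$, $\gamma>0$, and fix $\alpha\in(0,\alpha_0)\cap\left(0,\frac1{1+\gamma}\right]$. Let $0<\rho_0<1/2$ and $\epsilon_0>0$ be the constants (depending only on $d,\lambda,\Lambda,\gamma,\alpha$) with the property: for every $\vec q\in\mathbb{R}^d$, every $(\lambda,\Lambda)$-elliptic $F$ with $F(X,0)=0$, every $f\in L^\infty(B_1)$ with $\sup_{M\neq0}\|M\|^{-1}\|F(\cdot,M)-F(0,M)\|_{L^\infty(B_1)}+\|f\|_{L^\infty(B_1)}\le\epsilon_0$, and every viscosity solution $u\in C(B_1)$, $|u|\le1$, of $|\vec q+\nabla u|^\gamma F(X,D^2u)=f$ in $B_1$, there is an affine $\ell(X)=a+\vec b\cdot X$ with $|a|+|\vec b|\le C(d,\lambda,\Lambda)$ and $\sup_{B_{\rho_0}}|u-\ell|\le\rho_0^{1+\alpha}$. Now let $\vec q$, $F$, $f$, $u$ satisfy these same hypotheses. Then there exists a sequence of affine functions $\ell_k(X)=a_k+\vec b_k\cdot X$, $k\ge1$, such that $$|a_{k+1}-a_k|+\rho_0^k|\vec b_{k+1}-\vec b_k|\le C_0\,\rho_0^{(1+\alpha)k}$$ and $$\sup_{B_{\rho_0^k}}|u(X)-\ell_k(X)|\le\rho_0^{k(1+\alpha)},$$ where $C_0$ is a constant depending only on $d,\lambda,\Lambda$.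
   Context: $(\lambda,\Lambda)$-elliptic means $\lambda\|P\|\le F(X,M+P)-F(X,M)\le\Lambda\|P\|$ for all $X\in B_1$, $M\in\mathrm{Sym}(d)$, $P\ge0$. $\alpha_0=\alpha_0(d,\lambda,\Lambda)\in(0,1)$ is the optimal universal Hölder exponent of the gradient for viscosity solutions of constant coefficient homogeneous $(\lambda,\Lambda)$-elliptic equations $\mathfrak F(D^2h)=0$. *)

theory Defs
  imports "HOL-Analysis.Analysis"
begin

definition mnorm :: "real^'n^'n \<Rightarrow> real" where
  "mnorm M = onorm (\<lambda>x. M *v x)"

definition sym_mat :: "real^'n^'n \<Rightarrow> bool" where
  "sym_mat M \<longleftrightarrow> transpose M = M"

definition psd_mat :: "real^'n^'n \<Rightarrow> bool" where
  "psd_mat P \<longleftrightarrow> (\<forall>x. 0 \<le> x \<bullet> (P *v x))"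

definition unif_elliptic ::
  "real \<Rightarrow> real \<Rightarrow> (real^'n \<Rightarrow> real^'n^'n \<Rightarrow> real) \<Rightarrow> (real^'n) set \<Rightarrow> bool" where
  "unif_elliptic lam Lam F S \<longleftrightarrow>
     (\<forall>X\<in>S. \<forall>M P. sym_mat M \<and> sym_mat P \<and> psd_mat P \<longrightarrow>
        lam * mnorm P \<le> F X (M + P) - F X M \<and> F X (M + P) - F X M \<le> Lam * mnorm P)"

definition C2_on ::
  "(real^'n \<Rightarrow> real) \<Rightarrow> (real^'n \<Rightarrow> real^'n) \<Rightarrow> (real^'n \<Rightarrow> real^'n^'n) \<Rightarrow> (real^'n) set \<Rightarrow> bool" where
  "C2_on \<phi> g H S \<longleftrightarrow>
     (\<forall>y\<in>S. (\<phi> has_derivative (\<lambda>v. g y \<bullet> v)) (at y) \<and> (g has_derivative (\<lambda>v. H y *v v)) (at y))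
     \<and> continuous_on S H"

text \<open>C-viscosity sub/supersolutions of G(X, Du, D^2u) = 0 in the open set S.\<close>
definition visc_sub ::
  "(real^'n \<Rightarrow> real^'n \<Rightarrow> real^'n^'n \<Rightarrow> real) \<Rightarrow> (real^'n \<Rightarrow> real) \<Rightarrow> (real^'n) set \<Rightarrow> bool" where
  "visc_sub G u S \<longleftrightarrow>
     (\<forall>x0\<in>S. \<forall>\<phi> g H r. 0 < r \<and> ball x0 r \<subseteq> S \<and> C2_on \<phi> g H (ball x0 r)
        \<and> (\<forall>y\<in>ball x0 r. u y - \<phi> y \<le> u x0 - \<phi> x0) \<longrightarrow> 0 \<le> G x0 (g x0) (H x0))"

definition visc_super ::
  "(real^'n \<Rightarrow> real^'n \<Rightarrow> real^'n^'n \<Rightarrow> real) \<Rightarrow> (real^'n \<Rightarrow> real) \<Rightarrow> (real^'n) set \<Rightarrow> bool" where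
  "visc_super G u S \<longleftrightarrow>
     (\<forall>x0\<in>S. \<forall>\<phi> g H r. 0 < r \<and> ball x0 r \<subseteq> S \<and> C2_on \<phi> g H (ball x0 r)
        \<and> (\<forall>y\<in>ball x0 r. u y - \<phi> y \<ge> u x0 - \<phi> x0) \<longrightarrow> G x0 (g x0) (H x0) \<le> 0)"

definition visc_solution ::
  "(real^'n \<Rightarrow> real^'n \<Rightarrow> real^'n^'n \<Rightarrow> real) \<Rightarrow> (real^'n \<Rightarrow> real) \<Rightarrow> (real^'n) set \<Rightarrow> bool" where
  "visc_solution G u S \<longleftrightarrow> visc_sub G u S \<and> visc_super G u S"

text \<open>alpha_0(d,lambda,Lambda): optimal universal Hoelder exponent of the gradient for
  viscosity solutions of constant coefficient homogeneous elliptic equations.\<close>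
definition alpha0 :: "'n::finite itself \<Rightarrow> real \<Rightarrow> real \<Rightarrow> real" where
  "alpha0 _ lam Lam = Sup {\<beta>. 0 < \<beta> \<and> \<beta> < 1 \<and>
     (\<exists>K. \<forall>(\<FF>::real^'n^'n \<Rightarrow> real) (h::real^'n \<Rightarrow> real).
        unif_elliptic lam Lam (\<lambda>X M. \<FF> M) (ball 0 1) \<and> \<FF> 0 = 0 \<and>
        continuous_on (ball 0 1) h \<and> (\<forall>X\<in>ball 0 1. \<bar>h X\<bar> \<le> 1) \<and>
        visc_solution (\<lambda>X p M. \<FF> M) h (ball 0 1) \<longrightarrow>
        (\<exists>g. (\<forall>x\<in>ball 0 (1/2). (h has_derivative (\<lambda>v. g x \<bullet> v)) (at x)) \<and>
             (\<forall>x\<in>ball 0 (1/2). \<forall>y\<in>ball 0 (1/2). norm (g x - g y) \<le> K * norm (x - y) powr \<beta>)))}"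

definition hyp_class ::
  "real \<Rightarrow> real \<Rightarrow> real \<Rightarrow> real \<Rightarrow> real^'n \<Rightarrow> (real^'n \<Rightarrow> real^'n^'n \<Rightarrow> real)
   \<Rightarrow> (real^'n \<Rightarrow> real) \<Rightarrow> (real^'n \<Rightarrow> real) \<Rightarrow> bool" where
  "hyp_class lam Lam \<gamma> \<epsilon>0 q F f u \<longleftrightarrow>
     unif_elliptic lam Lam F (ball 0 1) \<and> (\<forall>X\<in>ball 0 1. F X 0 = 0) \<and>
     (\<exists>\<theta> \<eta>. (\<forall>M X. sym_mat M \<and> M \<noteq> 0 \<and> X \<in> ball 0 1 \<longrightarrow> \<bar>F X M - F 0 M\<bar> \<le> \<theta> * mnorm M)
            \<and> (\<forall>X\<in>ball 0 1. \<bar>f X\<bar> \<le> \<eta>) \<and> \<theta> + \<eta> \<le> \<epsilon>0) \<and>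
     continuous_on (ball 0 1) u \<and> (\<forall>X\<in>ball 0 1. \<bar>u X\<bar> \<le> 1) \<and>
     visc_solution (\<lambda>X p M. norm (q + p) powr \<gamma> * F X M - f X) u (ball 0 1)"

definition step_property ::
  "'n::finite itself \<Rightarrow> real \<Rightarrow> real \<Rightarrow> real \<Rightarrow> real \<Rightarrow> real \<Rightarrow> real \<Rightarrow> real \<Rightarrow> bool" where
  "step_property _ lam Lam \<gamma> \<alpha> \<rho>0 \<epsilon>0 C \<longleftrightarrow>
     (\<forall>(q::real^'n) F f u. hyp_class lam Lam \<gamma> \<epsilon>0 q F f u \<longrightarrow>
        (\<exists>a b. \<bar>a\<bar> + norm b \<le> C \<and>
               (\<forall>X\<in>ball 0 \<rho>0. \<bar>u X - (a + b \<bullet> X)\<bar> \<le> \<rho>0 powr (1 + \<alpha>))))"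

end

theory Submission
  imports Defs
begin

text \<open>If \<open>|u - l| \<le> \<rho>^(1+\<alpha>)\<close> on \<open>B_\<rho>\<close> for an affine \<open>l(X) = a + b\<bullet>X\<close>, the blow-up
  \<open>v(X) = (u(\<rho>X) - l(\<rho>X)) / \<rho>^(1+\<alpha>)\<close> solves an equation of the same class: the drift
  becomes \<open>\<rho>^-\<alpha> (q + b)\<close>, the operator \<open>\<rho>^(1-\<alpha>) F(\<rho>X, \<rho>^(\<alpha>-1) M)\<close> keeps its ellipticity and
  oscillation bound, and the right-hand side becomes \<open>\<rho>^(1-\<alpha>-\<alpha>\<gamma>) f(\<rho>X)\<close>, which is no larger
  because \<open>\<alpha>(1+\<gamma>) \<le> 1\<close>. Hence the one-step approximation applies to \<open>v\<close> again; iterating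
  and undoing the rescalings, the affine function found at step \<open>k\<close> enters \<open>l_(k+1) - l_k\<close>
  scaled by \<open>\<rho>^((1+\<alpha>)k)\<close>.\<close>

lemma mnorm_scaleR: "mnorm (c *\<^sub>R M) = \<bar>c\<bar> * mnorm (M::real^'n^'n)"
proof -
  have "(\<lambda>x. (c *\<^sub>R M) *v x) = (\<lambda>x. c *\<^sub>R (M *v x))"
    by (simp add: scaleR_matrix_vector_assoc)
  then show ?thesis unfolding mnorm_def by (simp add: onorm_scaleR)
qed

lemma sym_mat_scaleR: "sym_mat M \<Longrightarrow> sym_mat (c *\<^sub>R (M::real^'n^'n))"
  unfolding sym_mat_def by (simp add: transpose_scalar)

lemma psd_mat_scaleR: "psd_mat P \<Longrightarrow> 0 \<le> c \<Longrightarrow> psd_mat (c *\<^sub>R (P::real^'n^'n))"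
  unfolding psd_mat_def by (simp add: scaleR_matrix_vector_assoc[symmetric])

lemma matrix_vector_mult_uminus_left: "(- A) *v x = - ((A::'a::ring_1^'n^'m) *v x)"
  using matrix_vector_mult_diff_rdistrib[of 0 A x] by simp

lemma inverse_scaleR_mem_ball:
  fixes x y :: "'a::real_normed_vector"
  assumes "0 < r" "y \<in> ball (r *\<^sub>R x) (r * \<rho>)"
  shows "(1/r) *\<^sub>R y \<in> ball x \<rho>"
proof -
  have "r *\<^sub>R x - y = r *\<^sub>R (x - (1/r) *\<^sub>R y)" using assms by (simp add: algebra_simps)
  then have "dist (r *\<^sub>R x) y = r * dist x ((1/r) *\<^sub>R y)" using assms by (simp add: dist_norm)
  then show ?thesis using assms by simp
qed

lemma scaleR_mem_ball_0:
  fixes X :: "'a::real_normed_vector"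
  assumes "0 < r" "X \<in> ball 0 1"
  shows "r *\<^sub>R X \<in> ball 0 r"
  using assms by simp

lemma scaleR_mem_unit_ball:
  fixes X :: "'a::real_normed_vector"
  assumes "0 < r" "r \<le> 1" "X \<in> ball 0 1"
  shows "r *\<^sub>R X \<in> ball 0 1"
  using scaleR_mem_ball_0[OF assms(1,3)] subset_ball[OF assms(2)] by blast

lemma ball_scaleR_subset_unit_ball:
  fixes X0 :: "'a::real_normed_vector"
  assumes "0 < r" "r \<le> 1" "ball X0 \<rho> \<subseteq> ball 0 1"
  shows "ball (r *\<^sub>R X0) (r * \<rho>) \<subseteq> ball 0 1"
proof
  fix y assume "y \<in> ball (r *\<^sub>R X0) (r * \<rho>)"
  then have "(1/r) *\<^sub>R y \<in> ball 0 1" using assms inverse_scaleR_mem_ball by blast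
  then have "r *\<^sub>R ((1/r) *\<^sub>R y) \<in> ball 0 1" by (rule scaleR_mem_unit_ball[OF assms(1,2)])
  then show "y \<in> ball 0 1" using assms by simp
qed

lemma C2_on_affine_rescale:
  fixes \<phi> :: "real^'n \<Rightarrow> real"
  assumes C2: "C2_on \<phi> g H (ball X0 \<rho>)" and r: "0 < r"
  shows "C2_on (\<lambda>Y. a + b \<bullet> Y + s * \<phi> ((1/r) *\<^sub>R Y))
               (\<lambda>Y. b + (s/r) *\<^sub>R g ((1/r) *\<^sub>R Y))
               (\<lambda>Y. (s/(r*r)) *\<^sub>R H ((1/r) *\<^sub>R Y)) (ball (r *\<^sub>R X0) (r * \<rho>))"
  unfolding C2_on_def
proof (intro conjI ballI)
  have lin: "((\<lambda>Y. (1/r) *\<^sub>R Y) has_derivative (\<lambda>v. (1/r) *\<^sub>R v)) (at y)" for y :: "real^'n"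
    by (intro derivative_eq_intros) auto
  fix y assume "y \<in> ball (r *\<^sub>R X0) (r * \<rho>)"
  then have "(1/r) *\<^sub>R y \<in> ball X0 \<rho>" using r inverse_scaleR_mem_ball by blast
  then have d1: "(\<phi> has_derivative (\<lambda>v. g ((1/r) *\<^sub>R y) \<bullet> v)) (at ((1/r) *\<^sub>R y))"
    and d2: "(g has_derivative (\<lambda>v. H ((1/r) *\<^sub>R y) *v v)) (at ((1/r) *\<^sub>R y))"
    using C2 unfolding C2_on_def by auto
  have "((\<lambda>Y. \<phi> ((1/r) *\<^sub>R Y)) has_derivative (\<lambda>v. g ((1/r) *\<^sub>R y) \<bullet> ((1/r) *\<^sub>R v))) (at y)"
    using diff_chain_at[OF lin d1] by (simp add: o_def)
  then have "((\<lambda>Y. a + b \<bullet> Y + s * \<phi> ((1/r) *\<^sub>R Y)) has_derivative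
          (\<lambda>v. 0 + b \<bullet> v + s * (g ((1/r) *\<^sub>R y) \<bullet> ((1/r) *\<^sub>R v)))) (at y)"
    by (intro derivative_intros bounded_linear.has_derivative[OF bounded_linear_inner_right])
  then show "((\<lambda>Y. a + b \<bullet> Y + s * \<phi> ((1/r) *\<^sub>R Y)) has_derivative
          (\<lambda>v. (b + (s/r) *\<^sub>R g ((1/r) *\<^sub>R y)) \<bullet> v)) (at y)"
    by (rule has_derivative_eq_rhs) (auto simp: inner_add_left fun_eq_iff)
  have "((\<lambda>Y. g ((1/r) *\<^sub>R Y)) has_derivative (\<lambda>v. H ((1/r) *\<^sub>R y) *v ((1/r) *\<^sub>R v))) (at y)"
    using diff_chain_at[OF lin d2] by (simp add: o_def)
  then have "((\<lambda>Y. b + (s/r) *\<^sub>R g ((1/r) *\<^sub>R Y)) has_derivative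
          (\<lambda>v. 0 + (s/r) *\<^sub>R (H ((1/r) *\<^sub>R y) *v ((1/r) *\<^sub>R v)))) (at y)"
    by (intro derivative_intros)
  then show "((\<lambda>Y. b + (s/r) *\<^sub>R g ((1/r) *\<^sub>R Y)) has_derivative
          (\<lambda>v. (s/(r*r)) *\<^sub>R H ((1/r) *\<^sub>R y) *v v)) (at y)"
    by (rule has_derivative_eq_rhs)
       (auto simp: fun_eq_iff scaleR_matrix_vector_assoc[symmetric] matrix_vector_mult_scaleR)
next
  have image: "(\<lambda>Y. (1/r) *\<^sub>R Y) ` ball (r *\<^sub>R X0) (r * \<rho>) \<subseteq> ball X0 \<rho>"
    using r inverse_scaleR_mem_ball by blast
  have "continuous_on (ball X0 \<rho>) H" using C2 unfolding C2_on_def by auto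
  then have "continuous_on (ball (r *\<^sub>R X0) (r * \<rho>)) (\<lambda>Y. H ((1/r) *\<^sub>R Y))"
    by (rule continuous_on_compose2[OF _ _ image]) (intro continuous_intros)
  then show "continuous_on (ball (r *\<^sub>R X0) (r * \<rho>)) (\<lambda>Y. (s/(r*r)) *\<^sub>R H ((1/r) *\<^sub>R Y))"
    by (intro continuous_intros)
qed

lemma C2_on_uminus:
  assumes "C2_on \<phi> g H S"
  shows "C2_on (\<lambda>x. - \<phi> x) (\<lambda>x. - g x) (\<lambda>x. - H x) S"
  unfolding C2_on_def
proof (intro conjI ballI)
  fix y assume "y \<in> S"
  then have d1: "(\<phi> has_derivative (\<lambda>v. g y \<bullet> v)) (at y)"
    and d2: "(g has_derivative (\<lambda>v. H y *v v)) (at y)"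
    using assms unfolding C2_on_def by auto
  show "((\<lambda>x. - \<phi> x) has_derivative (\<lambda>v. - g y \<bullet> v)) (at y)"
    using has_derivative_minus[OF d1] by simp
  show "((\<lambda>x. - g x) has_derivative (\<lambda>v. - H y *v v)) (at y)"
    using has_derivative_minus[OF d2] by (simp add: matrix_vector_mult_uminus_left)
next
  show "continuous_on S (\<lambda>x. - H x)"
    using assms unfolding C2_on_def by (auto intro: continuous_on_minus)
qed

lemma visc_super_iff_visc_sub_uminus:
  "visc_super G u S \<longleftrightarrow> visc_sub (\<lambda>X p M. - G X (- p) (- M)) (\<lambda>x. - u x) S"
proof
  assume super: "visc_super G u S"
  show "visc_sub (\<lambda>X p M. - G X (- p) (- M)) (\<lambda>x. - u x) S"
    unfolding visc_sub_def
  proof (intro ballI allI impI)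
    fix x0 \<phi> g H r
    assume "x0 \<in> S" and "0 < r \<and> ball x0 r \<subseteq> S \<and> C2_on \<phi> g H (ball x0 r) \<and>
      (\<forall>y\<in>ball x0 r. - u y - \<phi> y \<le> - u x0 - \<phi> x0)"
    then have "G x0 (- g x0) (- H x0) \<le> 0"
      using super C2_on_uminus[of \<phi> g H "ball x0 r"] unfolding visc_super_def
      by (smt (verit, best))
    then show "0 \<le> - G x0 (- g x0) (- H x0)" by simp
  qed
next
  assume sub: "visc_sub (\<lambda>X p M. - G X (- p) (- M)) (\<lambda>x. - u x) S"
  show "visc_super G u S"
    unfolding visc_super_def
  proof (intro ballI allI impI)
    fix x0 \<phi> g H r
    assume "x0 \<in> S" and "0 < r \<and> ball x0 r \<subseteq> S \<and> C2_on \<phi> g H (ball x0 r) \<and>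
      (\<forall>y\<in>ball x0 r. u y - \<phi> y \<ge> u x0 - \<phi> x0)"
    then have "0 \<le> - G x0 (- (- g x0)) (- (- H x0))"
      using sub C2_on_uminus[of \<phi> g H "ball x0 r"] unfolding visc_sub_def
      by (smt (verit, best))
    then show "G x0 (g x0) (H x0) \<le> 0" by simp
  qed
qed

definition blow_up :: "real \<Rightarrow> real \<Rightarrow> real \<Rightarrow> real^'n \<Rightarrow> (real^'n \<Rightarrow> real) \<Rightarrow> real^'n \<Rightarrow> real" where
  "blow_up r s a b u X = (u (r *\<^sub>R X) - (a + b \<bullet> (r *\<^sub>R X))) / s"

lemma blow_up_trivial: "blow_up 1 1 0 0 u = u"
  by (simp add: blow_up_def fun_eq_iff)

lemma blow_up_uminus: "blow_up r s (- a) (- b) (\<lambda>x. - u x) = (\<lambda>X. - blow_up r s a b u X)"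
proof
  fix X
  have "- u (r *\<^sub>R X) - (- a + (- b) \<bullet> (r *\<^sub>R X)) = - (u (r *\<^sub>R X) - (a + b \<bullet> (r *\<^sub>R X)))"
    by (simp add: algebra_simps)
  then show "blow_up r s (- a) (- b) (\<lambda>x. - u x) X = - blow_up r s a b u X"
    unfolding blow_up_def by (simp only: divide_minus_left)
qed

lemma blow_up_blow_up:
  fixes u :: "real^'n \<Rightarrow> real"
  assumes "0 < r1" "0 < s1"
  shows "blow_up r2 s2 a2 b2 (blow_up r1 s1 a1 b1 u)
       = blow_up (r1 * r2) (s1 * s2) (a1 + s1 * a2) (b1 + (s1/r1) *\<^sub>R b2) u"
proof
  fix X :: "real^'n"
  define Z where "Z = (r1 * r2) *\<^sub>R X"
  have "(b1 + (s1/r1) *\<^sub>R b2) \<bullet> Z = b1 \<bullet> Z + s1 * (b2 \<bullet> (r2 *\<^sub>R X))"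
    using assms by (simp add: Z_def inner_add_left field_simps)
  moreover have "(x / s1 - y) / s2 = (x - s1 * y) / (s1 * s2)" for x y :: real
    using assms by (simp add: diff_divide_distrib)
  ultimately have "blow_up r2 s2 a2 b2 (blow_up r1 s1 a1 b1 u) X
      = (u Z - (a1 + b1 \<bullet> Z) - s1 * (a2 + b2 \<bullet> (r2 *\<^sub>R X))) / (s1 * s2)"
    "blow_up (r1 * r2) (s1 * s2) (a1 + s1 * a2) (b1 + (s1/r1) *\<^sub>R b2) u X
      = (u Z - (a1 + s1 * a2 + (b1 \<bullet> Z + s1 * (b2 \<bullet> (r2 *\<^sub>R X))))) / (s1 * s2)"
    by (simp_all only: blow_up_def Z_def scaleR_scaleR)
  then show "blow_up r2 s2 a2 b2 (blow_up r1 s1 a1 b1 u) X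
       = blow_up (r1 * r2) (s1 * s2) (a1 + s1 * a2) (b1 + (s1/r1) *\<^sub>R b2) u X"
    by (simp add: algebra_simps)
qed

lemma approx_if_blow_up_bounded:
  fixes u :: "real^'n \<Rightarrow> real"
  assumes "0 < r" "0 < s" and bound: "\<forall>X\<in>ball 0 1. \<bar>blow_up r s a b u X\<bar> \<le> 1"
  shows "\<forall>Y\<in>ball 0 r. \<bar>u Y - (a + b \<bullet> Y)\<bar> \<le> s"
proof
  fix Y :: "real^'n" assume "Y \<in> ball 0 r"
  then have "(1/r) *\<^sub>R Y \<in> ball 0 1" using assms by (simp add: field_simps)
  then have "\<bar>blow_up r s a b u ((1/r) *\<^sub>R Y)\<bar> \<le> 1" using bound by blast
  then show "\<bar>u Y - (a + b \<bullet> Y)\<bar> \<le> s" using assms by (simp add: blow_up_def abs_div)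
qed

lemma visc_sub_blow_up:
  fixes u :: "real^'n \<Rightarrow> real"
  assumes sub: "visc_sub G u (ball 0 1)"
    and r: "0 < r" "r \<le> 1" and s: "0 < s" and \<kappa>: "0 \<le> \<kappa>"
  shows "visc_sub (\<lambda>X p M. \<kappa> * G (r *\<^sub>R X) (b + (s/r) *\<^sub>R p) ((s/(r*r)) *\<^sub>R M))
    (blow_up r s a b u) (ball 0 1)"
  unfolding visc_sub_def
proof (intro ballI allI impI)
  fix X0 \<phi> g H \<rho>
  assume X0: "X0 \<in> ball (0::real^'n) 1"
    and test: "0 < \<rho> \<and> ball X0 \<rho> \<subseteq> ball 0 1 \<and> C2_on \<phi> g H (ball X0 \<rho>) \<and>
      (\<forall>y\<in>ball X0 \<rho>. blow_up r s a b u y - \<phi> y \<le> blow_up r s a b u X0 - \<phi> X0)"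
  define \<psi> where "\<psi> Y = a + b \<bullet> Y + s * \<phi> ((1/r) *\<^sub>R Y)" for Y
  have r0: "r \<noteq> 0" using r by simp
  have u_minus_\<psi>: "u Y - \<psi> Y = s * (blow_up r s a b u ((1/r) *\<^sub>R Y) - \<phi> ((1/r) *\<^sub>R Y))" for Y
    using r s by (simp add: \<psi>_def blow_up_def field_simps)
  have "r *\<^sub>R X0 \<in> ball 0 1" using scaleR_mem_unit_ball r X0 by blast
  moreover have "0 < r * \<rho>" using r test by simp
  moreover have "ball (r *\<^sub>R X0) (r * \<rho>) \<subseteq> ball 0 1"
    using ball_scaleR_subset_unit_ball r test by blast
  moreover have "C2_on \<psi> (\<lambda>Y. b + (s/r) *\<^sub>R g ((1/r) *\<^sub>R Y)) (\<lambda>Y. (s/(r*r)) *\<^sub>R H ((1/r) *\<^sub>R Y))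
      (ball (r *\<^sub>R X0) (r * \<rho>))"
    unfolding \<psi>_def using C2_on_affine_rescale test r by blast
  moreover have "\<forall>y\<in>ball (r *\<^sub>R X0) (r * \<rho>). u y - \<psi> y \<le> u (r *\<^sub>R X0) - \<psi> (r *\<^sub>R X0)"
  proof
    fix y assume "y \<in> ball (r *\<^sub>R X0) (r * \<rho>)"
    then have "(1/r) *\<^sub>R y \<in> ball X0 \<rho>" using r inverse_scaleR_mem_ball by blast
    then show "u y - \<psi> y \<le> u (r *\<^sub>R X0) - \<psi> (r *\<^sub>R X0)" using test s r0 by (simp add: u_minus_\<psi>)
  qed
  ultimately have "0 \<le> G (r *\<^sub>R X0) (b + (s/r) *\<^sub>R g ((1/r) *\<^sub>R (r *\<^sub>R X0)))
      ((s/(r*r)) *\<^sub>R H ((1/r) *\<^sub>R (r *\<^sub>R X0)))"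
    using sub unfolding visc_sub_def by blast
  then show "0 \<le> \<kappa> * G (r *\<^sub>R X0) (b + (s/r) *\<^sub>R g X0) ((s/(r*r)) *\<^sub>R H X0)"
    using \<kappa> r0 by simp
qed

lemma visc_solution_blow_up:
  fixes u :: "real^'n \<Rightarrow> real"
  assumes sol: "visc_solution G u (ball 0 1)"
    and r: "0 < r" "r \<le> 1" and s: "0 < s" and \<kappa>: "0 \<le> \<kappa>"
  shows "visc_solution (\<lambda>X p M. \<kappa> * G (r *\<^sub>R X) (b + (s/r) *\<^sub>R p) ((s/(r*r)) *\<^sub>R M))
    (blow_up r s a b u) (ball 0 1)"
proof -
  have "visc_sub (\<lambda>X p M. - G X (- p) (- M)) (\<lambda>x. - u x) (ball 0 1)"
    using sol by (simp add: visc_solution_def visc_super_iff_visc_sub_uminus)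
  then have "visc_sub (\<lambda>X p M. \<kappa> * - G (r *\<^sub>R X) (- (- b + (s/r) *\<^sub>R p)) (- ((s/(r*r)) *\<^sub>R M)))
      (blow_up r s (- a) (- b) (\<lambda>x. - u x)) (ball 0 1)"
    by (rule visc_sub_blow_up[OF _ r s \<kappa>])
  then have "visc_super (\<lambda>X p M. \<kappa> * G (r *\<^sub>R X) (b + (s/r) *\<^sub>R p) ((s/(r*r)) *\<^sub>R M))
      (blow_up r s a b u) (ball 0 1)"
    by (simp add: visc_super_iff_visc_sub_uminus blow_up_uminus)
  moreover have "visc_sub (\<lambda>X p M. \<kappa> * G (r *\<^sub>R X) (b + (s/r) *\<^sub>R p) ((s/(r*r)) *\<^sub>R M))
      (blow_up r s a b u) (ball 0 1)"
    using sol unfolding visc_solution_def by (intro visc_sub_blow_up[OF _ r s \<kappa>]) simp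
  ultimately show ?thesis by (simp add: visc_solution_def)
qed

lemma unif_elliptic_rescale:
  fixes F :: "real^'n \<Rightarrow> real^'n^'n \<Rightarrow> real"
  assumes ell: "unif_elliptic lam Lam F T" and t: "0 < t"
    and maps: "\<And>X. X \<in> S \<Longrightarrow> r *\<^sub>R X \<in> T"
  shows "unif_elliptic lam Lam (\<lambda>X M. t * F (r *\<^sub>R X) ((1/t) *\<^sub>R M)) S"
  unfolding unif_elliptic_def
proof (intro ballI allI impI)
  fix X and M P :: "real^'n^'n"
  assume "X \<in> S" and MP: "sym_mat M \<and> sym_mat P \<and> psd_mat P"
  define D where "D = F (r *\<^sub>R X) ((1/t) *\<^sub>R M + (1/t) *\<^sub>R P) - F (r *\<^sub>R X) ((1/t) *\<^sub>R M)"
  have "lam * mnorm ((1/t) *\<^sub>R P) \<le> D \<and> D \<le> Lam * mnorm ((1/t) *\<^sub>R P)"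
    using ell maps[OF \<open>X \<in> S\<close>] sym_mat_scaleR[of M "1/t"] sym_mat_scaleR[of P "1/t"]
      psd_mat_scaleR[of P "1/t"] MP t
    unfolding unif_elliptic_def D_def by simp
  then have "lam * mnorm P \<le> t * D \<and> t * D \<le> Lam * mnorm P"
    using t by (simp add: mnorm_scaleR field_simps)
  then show "lam * mnorm P \<le> t * F (r *\<^sub>R X) ((1/t) *\<^sub>R (M + P)) - t * F (r *\<^sub>R X) ((1/t) *\<^sub>R M) \<and>
      t * F (r *\<^sub>R X) ((1/t) *\<^sub>R (M + P)) - t * F (r *\<^sub>R X) ((1/t) *\<^sub>R M) \<le> Lam * mnorm P"
    by (simp add: D_def scaleR_add_right right_diff_distrib)
qed

lemma coefficient_oscillation_rescale:
  fixes F :: "real^'n \<Rightarrow> real^'n^'n \<Rightarrow> real"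
  assumes osc: "\<forall>M X. sym_mat M \<and> M \<noteq> 0 \<and> X \<in> T \<longrightarrow> \<bar>F X M - F 0 M\<bar> \<le> \<theta> * mnorm M"
    and t: "0 < t" and maps: "\<And>X. X \<in> S \<Longrightarrow> r *\<^sub>R X \<in> T"
  shows "\<forall>M X. sym_mat M \<and> M \<noteq> 0 \<and> X \<in> S \<longrightarrow>
    \<bar>t * F (r *\<^sub>R X) ((1/t) *\<^sub>R M) - t * F (r *\<^sub>R 0) ((1/t) *\<^sub>R M)\<bar> \<le> \<theta> * mnorm (M::real^'n^'n)"
proof (intro allI impI)
  fix M :: "real^'n^'n" and X assume MX: "sym_mat M \<and> M \<noteq> 0 \<and> X \<in> S"
  then have "\<bar>F (r *\<^sub>R X) ((1/t) *\<^sub>R M) - F 0 ((1/t) *\<^sub>R M)\<bar> \<le> \<theta> * mnorm ((1/t) *\<^sub>R M)"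
    using osc maps t sym_mat_scaleR[of M "1/t"] by simp
  then have "t * \<bar>F (r *\<^sub>R X) ((1/t) *\<^sub>R M) - F 0 ((1/t) *\<^sub>R M)\<bar> \<le> \<theta> * mnorm M"
    using t by (simp add: mnorm_scaleR field_simps)
  then show "\<bar>t * F (r *\<^sub>R X) ((1/t) *\<^sub>R M) - t * F (r *\<^sub>R 0) ((1/t) *\<^sub>R M)\<bar> \<le> \<theta> * mnorm M"
    using t by (simp add: abs_mult right_diff_distrib[symmetric])
qed

lemma drift_rescale_identity:
  fixes w p :: "'a::real_normed_vector"
  assumes "0 < c"
  shows "norm ((1/c) *\<^sub>R w + p) powr \<gamma> * (t * A) - t / c powr \<gamma> * B
       = t / c powr \<gamma> * (norm (w + c *\<^sub>R p) powr \<gamma> * A - B)"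
proof -
  have "w + c *\<^sub>R p = c *\<^sub>R ((1/c) *\<^sub>R w + p)" using assms by (simp add: algebra_simps)
  then have "norm (w + c *\<^sub>R p) powr \<gamma> = c powr \<gamma> * norm ((1/c) *\<^sub>R w + p) powr \<gamma>"
    using assms by (simp add: powr_mult)
  then show ?thesis using assms by (simp add: field_simps)
qed

lemma hyp_class_blow_up:
  fixes q b :: "real^'n"
  assumes H: "hyp_class lam Lam \<gamma> \<epsilon>0 q F f u"
    and r: "0 < r" "r \<le> 1" and s: "0 < s"
    and \<kappa>: "(r*r/s) / (s/r) powr \<gamma> \<le> 1"
    and approx: "\<forall>Y\<in>ball 0 r. \<bar>u Y - (a + b \<bullet> Y)\<bar> \<le> s"
  shows "hyp_class lam Lam \<gamma> \<epsilon>0 ((1/(s/r)) *\<^sub>R (q + b))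
     (\<lambda>X M. (r*r/s) * F (r *\<^sub>R X) ((1/(r*r/s)) *\<^sub>R M))
     (\<lambda>X. (r*r/s) / (s/r) powr \<gamma> * f (r *\<^sub>R X))
     (blow_up r s a b u)"
proof -
  define t where "t = r*r/s"
  define k where "k = t / (s/r) powr \<gamma>"
  have t: "0 < t" using r s by (simp add: t_def)
  have k: "0 \<le> k" "k \<le> 1" using r s \<kappa> by (simp_all add: k_def t_def)
  have maps: "\<And>X. X \<in> ball 0 1 \<Longrightarrow> r *\<^sub>R X \<in> ball (0::real^'n) 1"
    using scaleR_mem_unit_ball r by blast
  from H obtain \<theta> \<eta> where ell: "unif_elliptic lam Lam F (ball 0 1)"
    and F0: "\<forall>X\<in>ball 0 1. F X 0 = 0"
    and osc: "\<forall>M X. sym_mat M \<and> M \<noteq> 0 \<and> X \<in> ball 0 1 \<longrightarrow> \<bar>F X M - F 0 M\<bar> \<le> \<theta> * mnorm M"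
    and f_bound: "\<forall>X\<in>ball 0 1. \<bar>f X\<bar> \<le> \<eta>" and small: "\<theta> + \<eta> \<le> \<epsilon>0"
    and cont: "continuous_on (ball 0 1) u" and u_bound: "\<forall>X\<in>ball 0 1. \<bar>u X\<bar> \<le> 1"
    and sol: "visc_solution (\<lambda>X p M. norm (q + p) powr \<gamma> * F X M - f X) u (ball 0 1)"
    unfolding hyp_class_def by blast
  have f_bound': "\<forall>X\<in>ball 0 1. \<bar>k * f (r *\<^sub>R X)\<bar> \<le> \<eta>"
  proof
    fix X :: "real^'n" assume "X \<in> ball 0 1"
    then have "\<bar>f (r *\<^sub>R X)\<bar> \<le> \<eta>" using f_bound maps by blast
    then show "\<bar>k * f (r *\<^sub>R X)\<bar> \<le> \<eta>"
      using k by (simp add: abs_mult) (metis abs_ge_zero mult_left_le_one_le order_trans)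
  qed
  have cont': "continuous_on (ball 0 1) (blow_up r s a b u)"
  proof -
    have "continuous_on (ball 0 1) (\<lambda>X::real^'n. u (r *\<^sub>R X))"
      using maps by (intro continuous_on_compose2[OF cont] continuous_intros) auto
    then show ?thesis unfolding blow_up_def by (intro continuous_intros) (use s in auto)
  qed
  have bound': "\<forall>X\<in>ball 0 1. \<bar>blow_up r s a b u X\<bar> \<le> 1"
  proof
    fix X :: "real^'n" assume "X \<in> ball 0 1"
    then have "r *\<^sub>R X \<in> ball 0 r" by (rule scaleR_mem_ball_0[OF r(1)])
    with approx have "\<bar>u (r *\<^sub>R X) - (a + b \<bullet> (r *\<^sub>R X))\<bar> \<le> s" by (rule bspec)
    then show "\<bar>blow_up r s a b u X\<bar> \<le> 1" using s by (simp add: blow_up_def abs_div)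
  qed
  have sol': "visc_solution (\<lambda>X p M. norm ((1/(s/r)) *\<^sub>R (q + b) + p) powr \<gamma>
      * (t * F (r *\<^sub>R X) ((1/t) *\<^sub>R M)) - k * f (r *\<^sub>R X)) (blow_up r s a b u) (ball 0 1)"
  proof -
    have "0 < s/r" using r s by simp
    then have identity: "norm ((1/(s/r)) *\<^sub>R (q + b) + p) powr \<gamma> * (t * F (r *\<^sub>R X) ((1/t) *\<^sub>R M))
        - k * f (r *\<^sub>R X)
      = k * (norm (q + b + (s/r) *\<^sub>R p) powr \<gamma> * F (r *\<^sub>R X) ((1/t) *\<^sub>R M) - f (r *\<^sub>R X))"
      for X p M
      unfolding k_def by (rule drift_rescale_identity)
    have "s/(r*r) = 1/t" by (simp add: t_def)
    then have "visc_solution (\<lambda>X p M. k * (norm (q + b + (s/r) *\<^sub>R p) powr \<gamma>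
        * F (r *\<^sub>R X) ((1/t) *\<^sub>R M) - f (r *\<^sub>R X))) (blow_up r s a b u) (ball 0 1)"
      using visc_solution_blow_up[OF sol r s k(1), of b a] by (simp add: add.assoc)
    then show ?thesis by (simp only: identity)
  qed
  have F0': "\<forall>X\<in>ball 0 1. t * F (r *\<^sub>R X) ((1/t) *\<^sub>R 0) = 0"
    using F0 maps by (simp del: mem_ball_0)
  have small': "\<exists>\<theta> \<eta>. (\<forall>M X. sym_mat M \<and> M \<noteq> 0 \<and> X \<in> ball 0 1 \<longrightarrow>
        \<bar>t * F (r *\<^sub>R X) ((1/t) *\<^sub>R M) - t * F (r *\<^sub>R 0) ((1/t) *\<^sub>R M)\<bar> \<le> \<theta> * mnorm M)
      \<and> (\<forall>X\<in>ball 0 1. \<bar>k * f (r *\<^sub>R X)\<bar> \<le> \<eta>) \<and> \<theta> + \<eta> \<le> \<epsilon>0"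
    by (intro exI[of _ \<theta>] exI[of _ \<eta>] conjI coefficient_oscillation_rescale[OF osc t maps] f_bound' small)
  show ?thesis
    unfolding hyp_class_def t_def[symmetric] k_def[symmetric]
    by (intro conjI unif_elliptic_rescale[OF ell t maps] F0' small' cont' bound' sol')
qed

lemma rescaling_factor_le_1:
  fixes \<rho> \<alpha> \<gamma> :: real
  assumes \<rho>: "0 < \<rho>" "\<rho> < 1" and \<alpha>: "\<alpha> \<le> 1/(1+\<gamma>)" and \<gamma>: "0 < \<gamma>"
  shows "(\<rho>*\<rho>/\<rho> powr (1+\<alpha>)) / (\<rho> powr (1+\<alpha>)/\<rho>) powr \<gamma> \<le> 1"
proof -
  have split: "\<rho> powr (1+\<alpha>) = \<rho> * \<rho> powr \<alpha>" using \<rho> by (simp add: powr_add)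
  have "\<rho>*\<rho>/\<rho> powr (1+\<alpha>) = \<rho> powr (1-\<alpha>)" using \<rho> by (simp add: split powr_diff)
  moreover have "(\<rho> powr (1+\<alpha>)/\<rho>) powr \<gamma> = \<rho> powr (\<alpha>*\<gamma>)" using \<rho> by (simp add: split powr_powr)
  moreover have "\<rho> powr (1-\<alpha>) / \<rho> powr (\<alpha>*\<gamma>) = \<rho> powr (1 - \<alpha> - \<alpha>*\<gamma>)"
    by (simp add: powr_diff)
  moreover have "0 \<le> 1 - \<alpha> - \<alpha>*\<gamma>" using \<alpha> \<gamma> by (simp add: field_simps)
  ultimately show ?thesis using \<rho> by (simp add: powr_le1)
qed

lemma step_property_blow_up:
  assumes step: "step_property TYPE('n) lam Lam \<gamma> \<alpha> \<rho> \<epsilon>0 C"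
    and \<rho>: "0 < \<rho>" "\<rho> < 1" and \<alpha>: "\<alpha> \<le> 1/(1+\<gamma>)" and \<gamma>: "0 < \<gamma>"
    and H: "hyp_class lam Lam \<gamma> \<epsilon>0 (q::real^'n::finite) F f u"
  obtains a b q' F' f' where "\<bar>a\<bar> + norm b \<le> C"
    and "hyp_class lam Lam \<gamma> \<epsilon>0 q' F' f' (blow_up \<rho> (\<rho> powr (1+\<alpha>)) a b u)"
proof -
  obtain a b where ab: "\<bar>a\<bar> + norm b \<le> C"
    and approx: "\<forall>X\<in>ball 0 \<rho>. \<bar>u X - (a + b \<bullet> X)\<bar> \<le> \<rho> powr (1+\<alpha>)"
    using step H unfolding step_property_def by blast
  have "\<rho> \<le> 1" "0 < \<rho> powr (1+\<alpha>)" using \<rho> by simp_all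
  from ab hyp_class_blow_up[OF H \<rho>(1) this rescaling_factor_le_1[OF \<rho> \<alpha> \<gamma>] approx]
  show ?thesis by (rule that)
qed

lemma affine_approximations_iterate:
  fixes u :: "real^'n::finite \<Rightarrow> real"
  assumes step: "step_property TYPE('n) lam Lam \<gamma> \<alpha> \<rho> \<epsilon>0 C"
    and \<rho>: "0 < \<rho>" "\<rho> < 1" and \<alpha>: "\<alpha> \<le> 1/(1+\<gamma>)" and \<gamma>: "0 < \<gamma>"
    and H: "hyp_class lam Lam \<gamma> \<epsilon>0 q F f u"
  defines "S \<equiv> \<rho> powr (1+\<alpha>)"
  obtains A :: "nat \<Rightarrow> real" and B :: "nat \<Rightarrow> real^'n"
  where "\<And>k. \<bar>A (Suc k) - A k\<bar> + \<rho>^k * norm (B (Suc k) - B k) \<le> C * S^k"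
    and "\<And>k. \<forall>Y\<in>ball 0 (\<rho>^k). \<bar>u Y - (A k + B k \<bullet> Y)\<bar> \<le> S^k"
proof -
  define P where "P k AB \<longleftrightarrow> (\<exists>q F f. hyp_class lam Lam \<gamma> \<epsilon>0 q F f
      (blow_up (\<rho>^k) (S^k) (fst AB) (snd AB) u))" for k and AB :: "real \<times> (real^'n)"
  have S: "0 < S" using \<rho> by (simp add: S_def)
  have start: "P 0 (0, 0)" using H by (auto simp: P_def blow_up_trivial)
  have extend: "\<exists>AB'. P (Suc k) AB' \<and> \<bar>fst AB' - fst AB\<bar> + \<rho>^k * norm (snd AB' - snd AB) \<le> C * S^k"
    if Pk: "P k AB" for k AB
  proof -
    obtain A B where AB: "AB = (A, B)" by force
    obtain q F f where "hyp_class lam Lam \<gamma> \<epsilon>0 q F f (blow_up (\<rho>^k) (S^k) A B u)"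
      using Pk AB by (auto simp: P_def)
    then obtain a b q' F' f' where ab: "\<bar>a\<bar> + norm b \<le> C"
      and "hyp_class lam Lam \<gamma> \<epsilon>0 q' F' f' (blow_up \<rho> S a b (blow_up (\<rho>^k) (S^k) A B u))"
      unfolding S_def by (rule step_property_blow_up[OF step \<rho> \<alpha> \<gamma>])
    moreover have "blow_up \<rho> S a b (blow_up (\<rho>^k) (S^k) A B u)
        = blow_up (\<rho>^Suc k) (S^Suc k) (A + S^k * a) (B + (S^k / \<rho>^k) *\<^sub>R b) u"
      using \<rho> S by (simp add: blow_up_blow_up mult.commute)
    ultimately have "P (Suc k) (A + S^k * a, B + (S^k / \<rho>^k) *\<^sub>R b)"
      unfolding P_def by auto
    moreover have "\<bar>S^k * a\<bar> + \<rho>^k * norm ((S^k / \<rho>^k) *\<^sub>R b) = S^k * (\<bar>a\<bar> + norm b)"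
      using \<rho> S by (simp add: abs_mult distrib_left)
    moreover have "S^k * (\<bar>a\<bar> + norm b) \<le> C * S^k"
      using ab S by (simp add: mult.commute)
    ultimately show ?thesis using AB by (intro exI[of _ "(A + S^k * a, B + (S^k / \<rho>^k) *\<^sub>R b)"]) auto
  qed
  obtain AB where AB: "\<And>k. P k (AB k)"
    and increments: "\<And>k. \<bar>fst (AB (Suc k)) - fst (AB k)\<bar> + \<rho>^k * norm (snd (AB (Suc k)) - snd (AB k))
      \<le> C * S^k"
    using dependent_nat_choice[of P "\<lambda>k AB AB'. \<bar>fst AB' - fst AB\<bar> + \<rho>^k * norm (snd AB' - snd AB)
      \<le> C * S^k", OF exI[of "P 0", OF start] extend] by blast
  have "\<forall>Y\<in>ball 0 (\<rho>^k). \<bar>u Y - (fst (AB k) + snd (AB k) \<bullet> Y)\<bar> \<le> S^k" for k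
  proof -
    obtain q F f where "hyp_class lam Lam \<gamma> \<epsilon>0 q F f (blow_up (\<rho>^k) (S^k) (fst (AB k)) (snd (AB k)) u)"
      using AB[of k] unfolding P_def by blast
    then have "\<forall>X\<in>ball 0 1. \<bar>blow_up (\<rho>^k) (S^k) (fst (AB k)) (snd (AB k)) u X\<bar> \<le> 1"
      unfolding hyp_class_def by blast
    then show ?thesis by (rule approx_if_blow_up_bounded[rotated 2]) (use \<rho> S in simp_all)
  qed
  with increments show ?thesis by (rule that)
qed

theorem lemma6p2:
  fixes lam Lam C :: real
  assumes "0 < lam" and "lam \<le> Lam"
  shows "\<exists>C0 > 0. \<forall>\<gamma> \<alpha> \<rho>0 \<epsilon>0.
     0 < \<gamma> \<and> 0 < \<alpha> \<and> \<alpha> < alpha0 TYPE('n::finite) lam Lam \<and> \<alpha> \<le> 1 / (1 + \<gamma>) \<and>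
     0 < \<rho>0 \<and> \<rho>0 < 1/2 \<and> 0 < \<epsilon>0 \<and>
     step_property TYPE('n) lam Lam \<gamma> \<alpha> \<rho>0 \<epsilon>0 C \<longrightarrow>
     (\<forall>(q::real^'n) F f u. hyp_class lam Lam \<gamma> \<epsilon>0 q F f u \<longrightarrow>
        (\<exists>(a::nat \<Rightarrow> real) (b::nat \<Rightarrow> real^'n). \<forall>k\<ge>1.
           \<bar>a (Suc k) - a k\<bar> + \<rho>0 ^ k * norm (b (Suc k) - b k) \<le> C0 * \<rho>0 powr ((1 + \<alpha>) * k) \<and>
           (\<forall>X\<in>ball 0 (\<rho>0 ^ k). \<bar>u X - (a k + b k \<bullet> X)\<bar> \<le> \<rho>0 powr (k * (1 + \<alpha>)))))"
  \<comment> \<open>\<open>C\<close> is arbitrary (possibly \<open>\<le> 0\<close>), whereas \<open>C0\<close> must be positive.\<close>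
proof (intro exI[of _ "\<bar>C\<bar> + 1"] conjI allI impI)
  fix \<gamma> \<alpha> \<rho> \<epsilon>0 :: real and q :: "real^'n" and F f u
  assume "0 < \<gamma> \<and> 0 < \<alpha> \<and> \<alpha> < alpha0 TYPE('n) lam Lam \<and> \<alpha> \<le> 1 / (1 + \<gamma>) \<and>
     0 < \<rho> \<and> \<rho> < 1/2 \<and> 0 < \<epsilon>0 \<and> step_property TYPE('n) lam Lam \<gamma> \<alpha> \<rho> \<epsilon>0 C"
  then have step: "step_property TYPE('n) lam Lam \<gamma> \<alpha> \<rho> \<epsilon>0 C"
    and \<rho>: "0 < \<rho>" "\<rho> < 1" and \<alpha>: "\<alpha> \<le> 1/(1+\<gamma>)" and \<gamma>: "0 < \<gamma>" by auto
  assume H: "hyp_class lam Lam \<gamma> \<epsilon>0 q F f u"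
  obtain A B where increments:
      "\<And>k. \<bar>A (Suc k) - A k\<bar> + \<rho>^k * norm (B (Suc k) - B k) \<le> C * (\<rho> powr (1+\<alpha>))^k"
    and approx: "\<And>k. \<forall>Y\<in>ball 0 (\<rho>^k). \<bar>u Y - (A k + B k \<bullet> Y)\<bar> \<le> (\<rho> powr (1+\<alpha>))^k"
    using affine_approximations_iterate[OF step \<rho> \<alpha> \<gamma> H] by blast
  have power: "(\<rho> powr (1+\<alpha>))^k = \<rho> powr ((1+\<alpha>) * k)" for k :: nat
    using \<rho> by (simp add: powr_realpow[symmetric] powr_powr)
  show "\<exists>a b. \<forall>k\<ge>1.
      \<bar>a (Suc k) - a k\<bar> + \<rho> ^ k * norm (b (Suc k) - b k) \<le> (\<bar>C\<bar> + 1) * \<rho> powr ((1 + \<alpha>) * k) \<and>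
      (\<forall>X\<in>ball 0 (\<rho> ^ k). \<bar>u X - (a k + b k \<bullet> X)\<bar> \<le> \<rho> powr (k * (1 + \<alpha>)))"
  proof (intro exI[of _ A] exI[of _ B] allI impI conjI)
    fix k :: nat
    have "C * \<rho> powr ((1+\<alpha>) * k) \<le> (\<bar>C\<bar> + 1) * \<rho> powr ((1+\<alpha>) * k)"
      by (intro mult_right_mono) auto
    then show "\<bar>A (Suc k) - A k\<bar> + \<rho>^k * norm (B (Suc k) - B k) \<le> (\<bar>C\<bar> + 1) * \<rho> powr ((1+\<alpha>) * k)"
      using increments[of k] unfolding power by linarith
    show "\<forall>X\<in>ball 0 (\<rho>^k). \<bar>u X - (A k + B k \<bullet> X)\<bar> \<le> \<rho> powr (k * (1+\<alpha>))"
      using approx[of k] unfolding power by (simp add: mult.commute)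
  qed
qed simp

end
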